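(* Let $S$ be a left I-order in an inverse semigroup $Q$. Then $S$ is straight in $Q$ if and only if $S$ intersects every $\mathcal{L}$-class of $Q$.
   Context: For an element $a$ of an inverse semigroup $Q$, $a^{-1}$ is its unique inverse. A subsemigroup $S$ of $Q$ is a left I-order in $Q$ if every $q\in Q$ can be written $q=a^{-1}b$ with $a,b\in S$; it is straight in $Q$ if $a,b$ can always be chosen with $a\,\mathcal{R}\,b$ in $Q$. $\mathcal{L},\mathcal{R}$ are Green's relations of $Q$. *)

theory Defs
  imports Main
begin

text \<open>The inverse semigroup Q is the whole type 'a (a semigroup under *).
  Q is inverse if every element has a unique inverse.\<close>

definition inverse_semigroup :: "'a::semigroup_mult itself \<Rightarrow> bool" where
  "inverse_semigroup T \<longleftrightarrow> (\<forall>a::'a. \<exists>!b. a * b * a = a \<and> b * a * b = b)"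

definition sinv :: "'a::semigroup_mult \<Rightarrow> 'a" where
  "sinv a = (THE b. a * b * a = a \<and> b * a * b = b)"

definition subsemigroup :: "'a::semigroup_mult set \<Rightarrow> bool" where
  "subsemigroup S \<longleftrightarrow> (\<forall>a\<in>S. \<forall>b\<in>S. a * b \<in> S)"

text \<open>Green's relations of Q: a L b iff Q^1 a = Q^1 b; a R b iff a Q^1 = b Q^1.\<close>

definition greenL :: "'a::semigroup_mult \<Rightarrow> 'a \<Rightarrow> bool" where
  "greenL a b \<longleftrightarrow> insert a {x * a | x. True} = insert b {x * b | x. True}"

definition greenR :: "'a::semigroup_mult \<Rightarrow> 'a \<Rightarrow> bool" where
  "greenR a b \<longleftrightarrow> insert a {a * x | x. True} = insert b {b * x | x. True}"

definition left_I_order :: "'a::semigroup_mult set \<Rightarrow> bool" where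
  "left_I_order S \<longleftrightarrow> subsemigroup S \<and> (\<forall>q. \<exists>a\<in>S. \<exists>b\<in>S. q = sinv a * b)"

definition straight_left_I_order :: "'a::semigroup_mult set \<Rightarrow> bool" where
  "straight_left_I_order S \<longleftrightarrow> (\<forall>q. \<exists>a\<in>S. \<exists>b\<in>S. q = sinv a * b \<and> greenR a b)"

end

theory Submission
  imports Defs
begin

text \<open>
  In an inverse semigroup idempotents commute, which yields \<open>a \<R> b \<longleftrightarrow> a a' = b b'\<close> and
  \<open>a \<L> b \<longleftrightarrow> a' a = b' b\<close>.  If \<open>q = a' b\<close> with \<open>a \<R> b\<close>, then
  \<open>q' q = b' (a a') b = b' b\<close>, so \<open>b \<in> S\<close> lies in the \<L>-class of \<open>q\<close>.  Conversely, write
  \<open>q = a' b\<close> with \<open>a, b \<in> S\<close> and pick \<open>u \<in> S\<close> in the \<L>-class of the idempotent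
  \<open>e = a a' b b'\<close>, so that \<open>u' u = e\<close>.  Then \<open>c = u a\<close> and \<open>d = u b\<close> lie in \<open>S\<close>,
  \<open>c' d = a' e b = a' b = q\<close>, and since \<open>e\<close> lies below both \<open>a a'\<close> and \<open>b b'\<close>,
  \<open>c c' = u (a a') u' = u u' = u (b b') u' = d d'\<close>.
\<close>

lemma principal_right_ideal_mono:
  assumes "(b::'a::semigroup_mult) \<in> insert a {a * x | x. True}"
  shows "insert b {b * x | x. True} \<subseteq> insert a {a * x | x. True}"
  using assms by (auto simp: mult.assoc)

lemma principal_left_ideal_mono:
  assumes "(b::'a::semigroup_mult) \<in> insert a {x * a | x. True}"
  shows "insert b {x * b | x. True} \<subseteq> insert a {x * a | x. True}"
  using assms by (auto simp flip: mult.assoc)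

lemma greenR_iff_mem:
  "greenR (a::'a::semigroup_mult) b \<longleftrightarrow>
     b \<in> insert a {a * x | x. True} \<and> a \<in> insert b {b * x | x. True}"
  (is "_ \<longleftrightarrow> b \<in> ?Ia \<and> a \<in> ?Ib")
  unfolding greenR_def
proof
  assume "?Ia = ?Ib"
  then show "b \<in> ?Ia \<and> a \<in> ?Ib" by blast
next
  assume "b \<in> ?Ia \<and> a \<in> ?Ib"
  then show "?Ia = ?Ib"
    using principal_right_ideal_mono[of a b] principal_right_ideal_mono[of b a] by blast
qed

lemma greenL_iff_mem:
  "greenL (a::'a::semigroup_mult) b \<longleftrightarrow>
     b \<in> insert a {x * a | x. True} \<and> a \<in> insert b {x * b | x. True}"
  (is "_ \<longleftrightarrow> b \<in> ?Ia \<and> a \<in> ?Ib")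
  unfolding greenL_def
proof
  assume "?Ia = ?Ib"
  then show "b \<in> ?Ia \<and> a \<in> ?Ib" by blast
next
  assume "b \<in> ?Ia \<and> a \<in> ?Ib"
  then show "?Ia = ?Ib"
    using principal_left_ideal_mono[of a b] principal_left_ideal_mono[of b a] by blast
qed

context
  assumes inverse: "inverse_semigroup TYPE('a::semigroup_mult)"
begin

lemma sinv_unique: "\<exists>!b. (a::'a) * b * a = a \<and> b * a * b = b"
  using inverse unfolding inverse_semigroup_def by blast

lemma mult_sinv_mult [simp]: "(a::'a) * sinv a * a = a"
  and sinv_mult_sinv [simp]: "sinv a * a * sinv a = sinv a"
  using theI'[OF sinv_unique[of a]] unfolding sinv_def by auto

lemma sinv_eqI:
  assumes "(a::'a) * b * a = a" and "b * a * b = b"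
  shows "sinv a = b"
  using sinv_unique[of a] assms mult_sinv_mult[of a] sinv_mult_sinv[of a] by blast

lemma sinv_sinv [simp]: "sinv (sinv (a::'a)) = a"
  by (rule sinv_eqI) simp_all

lemma sinv_idem:
  assumes "(e::'a) * e = e"
  shows "sinv e = e"
  using assms by (intro sinv_eqI) simp_all

lemma idem_mult_sinv [simp]: "(a::'a) * sinv a * (a * sinv a) = a * sinv a"
  by (metis mult.assoc mult_sinv_mult)

lemma idem_sinv_mult [simp]: "sinv (a::'a) * a * (sinv a * a) = sinv a * a"
  by (metis mult.assoc sinv_mult_sinv)

lemma idem_mult_idem:
  assumes e: "(e::'a) * e = e" and f: "f * f = f"
  shows "e * f * (e * f) = e * f"
proof -
  define x where "x = sinv (e * f)"
  have x1: "e * f * x * (e * f) = e * f" and x2: "x * (e * f) * x = x"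
    unfolding x_def by simp_all
  \<comment> \<open>f x e is another inverse of e f, hence equals x and is idempotent\<close>
  have "sinv (e * f) = f * x * e"
  proof (rule sinv_eqI)
    show "e * f * (f * x * e) * (e * f) = e * f"
      using x1 e f by (metis mult.assoc)
    have "f * x * e * (e * f) * (f * x * e) = f * (x * (e * f) * x) * e"
      using e f by (metis mult.assoc)
    then show "f * x * e * (e * f) * (f * x * e) = f * x * e"
      using x2 by simp
  qed
  then have fxe: "f * x * e = x" by (simp add: x_def)
  have xx: "x * x = x"
  proof -
    have "x * x = (f * x * e) * (f * x * e)" using fxe by simp
    also have "\<dots> = f * (x * (e * f) * x) * e" by (simp add: mult.assoc)
    also have "\<dots> = x" using x2 fxe by simp
    finally show ?thesis .
  qed
  have "e * f = sinv x" by (simp add: x_def)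
  also have "\<dots> = x" using sinv_idem[OF xx] .
  finally show ?thesis using xx by simp
qed

lemma idem_commute:
  assumes e: "(e::'a) * e = e" and f: "f * f = f"
  shows "e * f = f * e"
proof -
  have "e * f = sinv (e * f)"
    using sinv_idem[OF idem_mult_idem[OF e f]] by simp
  also have "\<dots> = f * e"
  proof (rule sinv_eqI)
    have "e * f * (f * e) * (e * f) = e * (f * f) * (e * e) * f"
      by (simp add: mult.assoc)
    then show "e * f * (f * e) * (e * f) = e * f"
      using idem_mult_idem[OF e f] e f by (simp add: mult.assoc)
    have "f * e * (e * f) * (f * e) = f * (e * e) * (f * f) * e"
      by (simp add: mult.assoc)
    then show "f * e * (e * f) * (f * e) = f * e"
      using idem_mult_idem[OF f e] e f by (simp add: mult.assoc)
  qed
  finally show ?thesis .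
qed

lemma sinv_mult: "sinv ((a::'a) * b) = sinv b * sinv a"
proof (rule sinv_eqI)
  have comm: "b * sinv b * (sinv a * a) = sinv a * a * (b * sinv b)"
    by (simp add: idem_commute)
  have "a * b * (sinv b * sinv a) * (a * b) = a * (b * sinv b * (sinv a * a)) * b"
    by (simp add: mult.assoc)
  also have "\<dots> = (a * sinv a * a) * (b * sinv b * b)"
    unfolding comm by (simp add: mult.assoc)
  finally show "a * b * (sinv b * sinv a) * (a * b) = a * b"
    by simp
  have "sinv b * sinv a * (a * b) * (sinv b * sinv a) = sinv b * (sinv a * a * (b * sinv b)) * sinv a"
    by (simp add: mult.assoc)
  also have "\<dots> = (sinv b * b * sinv b) * (sinv a * a * sinv a)"
    unfolding comm [symmetric] by (simp add: mult.assoc)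
  finally show "sinv b * sinv a * (a * b) * (sinv b * sinv a) = sinv b * sinv a"
    by simp
qed

lemma mem_principal_right_ideal_iff:
  "(b::'a) \<in> insert a {a * x | x. True} \<longleftrightarrow> a * sinv a * b = b"
proof
  assume "b \<in> insert a {a * x | x. True}"
  then show "a * sinv a * b = b"
    by (auto simp flip: mult.assoc)
next
  assume "a * sinv a * b = b"
  then have "b = a * (sinv a * b)" by (simp add: mult.assoc)
  then show "b \<in> insert a {a * x | x. True}" by blast
qed

lemma mem_principal_left_ideal_iff:
  "(b::'a) \<in> insert a {x * a | x. True} \<longleftrightarrow> b * sinv a * a = b"
proof
  assume "b \<in> insert a {x * a | x. True}"
  moreover have "a * (sinv a * a) = a"
    by (simp flip: mult.assoc)
  ultimately show "b * sinv a * a = b"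
    by (auto simp add: mult.assoc)
next
  assume "b * sinv a * a = b"
  then have "b = (b * sinv a) * a" by simp
  then show "b \<in> insert a {x * a | x. True}" by blast
qed

lemma greenR_iff: "greenR (a::'a) b \<longleftrightarrow> a * sinv a = b * sinv b"
proof
  assume "greenR a b"
  then have ab: "a * sinv a * b = b" and ba: "b * sinv b * a = a"
    by (simp_all only: greenR_iff_mem mem_principal_right_ideal_iff)
  have "a * sinv a = b * sinv b * (a * sinv a)"
    by (metis ba mult.assoc)
  also have "\<dots> = a * sinv a * (b * sinv b)"
    by (simp add: idem_commute)
  also have "\<dots> = b * sinv b"
    by (metis ab mult.assoc)
  finally show "a * sinv a = b * sinv b" .
next
  assume eq: "a * sinv a = b * sinv b"
  have "a * sinv a * b = b"
    by (simp add: eq)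
  moreover have "b * sinv b * a = a"
    by (simp flip: eq)
  ultimately show "greenR a b"
    by (simp only: greenR_iff_mem mem_principal_right_ideal_iff)
qed

lemma greenL_iff: "greenL (a::'a) b \<longleftrightarrow> sinv a * a = sinv b * b"
proof
  assume "greenL a b"
  then have ab: "b * sinv a * a = b" and ba: "a * sinv b * b = a"
    by (simp_all only: greenL_iff_mem mem_principal_left_ideal_iff)
  have "sinv a * a = sinv a * a * (sinv b * b)"
    by (metis ba mult.assoc)
  also have "\<dots> = sinv b * b * (sinv a * a)"
    by (simp add: idem_commute)
  also have "\<dots> = sinv b * b"
    by (metis ab mult.assoc)
  finally show "sinv a * a = sinv b * b" .
next
  assume eq: "sinv a * a = sinv b * b"
  have "b * sinv a * a = b * (sinv b * b)" and "a * sinv b * b = a * (sinv a * a)"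
    by (simp_all add: mult.assoc eq)
  then have "b * sinv a * a = b" and "a * sinv b * b = a"
    by (simp_all flip: mult.assoc)
  then show "greenL a b"
    by (simp only: greenL_iff_mem mem_principal_left_ideal_iff)
qed

lemma mult_idem_mult_sinv_absorb:
  assumes "sinv u * u * f = sinv (u::'a) * u"
  shows "u * f * sinv u = u * sinv u"
proof -
  have "u * f * sinv u = u * (sinv u * u * f) * sinv u"
    by (metis mult.assoc mult_sinv_mult)
  also have "\<dots> = u * (sinv u * u) * sinv u"
    by (simp only: assms)
  also have "\<dots> = u * sinv u"
    by (simp flip: mult.assoc)
  finally show ?thesis .
qed

lemma left_translate_by_domain:
  assumes u_domain: "sinv u * u = (a::'a) * sinv a * (b * sinv b)"
  shows "sinv (u * a) * (u * b) = sinv a * b"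
    and "greenR (u * a) (u * b)"
proof -
  have "sinv (u * a) * (u * b) = sinv a * (sinv u * u) * b"
    by (simp add: sinv_mult mult.assoc)
  also have "\<dots> = (sinv a * a * sinv a) * (b * sinv b * b)"
    by (simp add: u_domain mult.assoc)
  finally show "sinv (u * a) * (u * b) = sinv a * b"
    by simp
  have comm: "b * sinv b * (a * sinv a) = a * sinv a * (b * sinv b)"
    by (simp add: idem_commute)
  have "sinv u * u * (a * sinv a) = a * sinv a * (a * sinv a) * (b * sinv b)"
    unfolding u_domain by (metis comm mult.assoc)
  then have dom_a: "sinv u * u * (a * sinv a) = sinv u * u"
    by (simp add: u_domain)
  have "sinv u * u * (b * sinv b) = a * sinv a * (b * sinv b * (b * sinv b))"
    unfolding u_domain by (simp only: mult.assoc)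
  then have dom_b: "sinv u * u * (b * sinv b) = sinv u * u"
    by (simp add: u_domain)
  have "u * a * sinv (u * a) = u * (a * sinv a) * sinv u"
    by (simp add: sinv_mult mult.assoc)
  also have "\<dots> = u * (b * sinv b) * sinv u"
    by (simp only: mult_idem_mult_sinv_absorb dom_a dom_b)
  also have "\<dots> = u * b * sinv (u * b)"
    by (simp add: sinv_mult mult.assoc)
  finally show "greenR (u * a) (u * b)"
    by (simp add: greenR_iff)
qed

lemma straight_imp_meets_greenL_classes:
  assumes "straight_left_I_order S"
  shows "\<exists>s\<in>S. greenL s (q::'a)"
proof -
  obtain a b where "b \<in> S" and q: "q = sinv a * b" and "greenR a b"
    using assms unfolding straight_left_I_order_def by blast
  then have ab: "a * sinv a = b * sinv b"
    by (simp add: greenR_iff)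
  have "sinv q * q = sinv b * (a * sinv a) * b"
    by (simp add: q sinv_mult mult.assoc)
  also have "\<dots> = sinv b * b * sinv b * b"
    by (simp add: ab mult.assoc)
  finally have "greenL b q"
    by (simp add: greenL_iff)
  with \<open>b \<in> S\<close> show ?thesis by blast
qed

lemma meets_greenL_classes_imp_straight:
  assumes "left_I_order S" and meets: "\<forall>q::'a. \<exists>s\<in>S. greenL s q"
  shows "straight_left_I_order S"
  unfolding straight_left_I_order_def
proof
  fix q :: 'a
  obtain a b where "a \<in> S" "b \<in> S" and q: "q = sinv a * b"
    using assms(1) unfolding left_I_order_def by blast
  define e where "e = a * sinv a * (b * sinv b)"
  have "e * e = e"
    unfolding e_def by (simp add: idem_mult_idem)
  obtain u where "u \<in> S" and "greenL u e"
    using meets by blast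
  then have "sinv u * u = a * sinv a * (b * sinv b)"
    using \<open>e * e = e\<close> by (simp add: greenL_iff sinv_idem e_def)
  moreover have "u * a \<in> S" and "u * b \<in> S"
    using assms(1) \<open>u \<in> S\<close> \<open>a \<in> S\<close> \<open>b \<in> S\<close>
    unfolding left_I_order_def subsemigroup_def by blast+
  ultimately show "\<exists>c\<in>S. \<exists>d\<in>S. q = sinv c * d \<and> greenR c d"
    unfolding q using left_translate_by_domain by metis
qed

end

theorem lemma2p1:
  fixes S :: "'a::semigroup_mult set"
  assumes "inverse_semigroup TYPE('a)"
    and "left_I_order S"
  shows "straight_left_I_order S \<longleftrightarrow> (\<forall>q::'a. \<exists>s\<in>S. greenL s q)"
  using straight_imp_meets_greenL_classes[OF assms(1)]
    meets_greenL_classes_imp_straight[OF assms]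
  by blast

end
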